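(* Let $C$ be an independent set of the Kneser graph of flags of type $\{2,3\}$ of $\mathrm{PG}(6,q)$, let $H$ be a hyperplane and $P$ a point of $\mathrm{PG}(6,q)$. (i) Let $\mathcal{E}$ be the set of planes $E$ of $H$ for which there is a solid $S$ with $(E,S)\in C$ and $E=H\cap S$. Then $E\cap E'\neq\emptyset$ for all $E,E'\in\mathcal{E}$, i.e. $\mathcal{E}$ is an independent set of the Kneser graph of planes of $H$; hence $|\mathcal{E}|\le\begin{bmatrix}5\\2\end{bmatrix}_q$. (ii) Let $\mathcal{S}$ be the set of solids $S$ for which there is a flag $(E,S)\in C$ with $P\in S\setminus E$. Then $|\mathcal{S}|\le\begin{bmatrix}5\\2\end{bmatrix}_q$.
   Context: Dimensions are projective (planes 2, solids 3, hyperplanes 5). A flag of type $\{2,3\}$ is a pair $(E,S)$ of a plane $E$ and a solid $S$ with $E\subseteq S$; in the Kneser graph distinct flags $(E,S),(E',S')$ are adjacent iff $E\cap S'=\emptyset$ and $E'\cap S=\emptyset$. The Kneser graph of planes of $H$ has planes of $H$ as vertices, adjacent iff disjoint. $\begin{bmatrix}5\\2\end{bmatrix}_q=\frac{(q^5-1)(q^4-1)}{(q^2-1)(q-1)}$. *)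

theory Defs
  imports "HOL-Analysis.Analysis"
begin

text \<open>PG(6,q) is modelled as the lattice of subspaces of the 7-dimensional
vector space 'a^7 over a finite field 'a with q = CARD('a) elements.
A projective subspace of projective dimension k is a vector subspace of
(vector) dimension k+1.  Projective disjointness = intersection is {0}.\<close>

definition proj_sub :: "nat \<Rightarrow> ('a::field ^ 7) set \<Rightarrow> bool" where
  "proj_sub k U \<longleftrightarrow> vec.subspace U \<and> vec.dim U = k + 1"

abbreviation is_point :: "('a::field ^ 7) set \<Rightarrow> bool" where "is_point U \<equiv> proj_sub 0 U"
abbreviation is_plane :: "('a::field ^ 7) set \<Rightarrow> bool" where "is_plane U \<equiv> proj_sub 2 U"
abbreviation is_solid :: "('a::field ^ 7) set \<Rightarrow> bool" where "is_solid U \<equiv> proj_sub 3 U"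
abbreviation is_hyperplane :: "('a::field ^ 7) set \<Rightarrow> bool" where "is_hyperplane U \<equiv> proj_sub 5 U"

definition proj_disjoint :: "('a::field ^ 7) set \<Rightarrow> ('a ^ 7) set \<Rightarrow> bool" where
  "proj_disjoint U W \<longleftrightarrow> U \<inter> W = {0}"

definition flag23 :: "('a::field ^ 7) set \<times> ('a ^ 7) set \<Rightarrow> bool" where
  "flag23 F \<longleftrightarrow> is_plane (fst F) \<and> is_solid (snd F) \<and> fst F \<subseteq> snd F"

definition kneser_flag_adj ::
  "('a::field ^ 7) set \<times> ('a ^ 7) set \<Rightarrow> ('a ^ 7) set \<times> ('a ^ 7) set \<Rightarrow> bool" where
  "kneser_flag_adj F F' \<longleftrightarrow> F \<noteq> F' \<and>
     proj_disjoint (fst F) (snd F') \<and> proj_disjoint (fst F') (snd F)"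

definition indep_flag_set :: "(('a::field ^ 7) set \<times> ('a ^ 7) set) set \<Rightarrow> bool" where
  "indep_flag_set C \<longleftrightarrow> (\<forall>F\<in>C. flag23 F) \<and> (\<forall>F\<in>C. \<forall>F'\<in>C. \<not> kneser_flag_adj F F')"

definition gauss_5_2 :: "nat \<Rightarrow> real" where
  "gauss_5_2 q = ((real q ^ 5 - 1) * (real q ^ 4 - 1)) / ((real q ^ 2 - 1) * (real q - 1))"

end

theory Submission
  imports Defs "HOL-Computational_Algebra.Polynomial_Factorial"
begin

text \<open>Both bounds reduce to the Erdos-Ko-Rado bound for planes of \<open>PG(5,q)\<close>: pairwise
  non-disjoint planes of a 6-dimensional space number at most \<open>[5 2]\<^sub>q\<close>.
  For (i), if \<open>E = H \<inter> S\<close> and \<open>E' = H \<inter> S'\<close> were disjoint, then \<open>E \<inter> S'\<close> and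
  \<open>E' \<inter> S\<close>, both equal to \<open>E \<inter> E'\<close>, would be trivial and the two flags adjacent.
  For (ii), cut the solids with a hyperplane \<open>H'\<close> missing \<open>P\<close>: \<open>S \<mapsto> S \<inter> H'\<close> is injective
  on solids through \<open>P\<close>, and \<open>S \<inter> S' \<inter> H' = 0\<close> would give \<open>S \<inter> S' = P\<close>, so that
  \<open>E \<inter> S'\<close> and \<open>E' \<inter> S\<close>, lying in \<open>P\<close> but not containing it, would be trivial.

  The bound itself comes from double counting over the ordered bases \<open>b\<close> of the 6-space.
  Read through \<open>b\<close> as a plane over \<open>GF(q\<^sup>3)\<close>, the 6-space is covered by a spread of
  \<open>q\<^sup>3 + 1\<close> pairwise disjoint planes; an intersecting family contains at most one of them,
  while every plane lies in the spread of exactly \<open>(q\<^sup>3 + 1) N\<close> bases, \<open>N\<close> being the number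
  of bases starting with a basis of that plane. Hence the family has at most
  \<open>(\<Prod>i<6. q\<^sup>6 - q\<^sup>i) / ((q\<^sup>3 + 1) N) = [5 2]\<^sub>q\<close> members.\<close>

section \<open>Counting in vector spaces over a finite field\<close>

lemma card_subspace:
  fixes U :: "('a::{field,finite} ^ 'n) set"
  assumes "vec.subspace U"
  shows "card U = CARD('a) ^ vec.dim U"
proof -
  obtain B where B: "B \<subseteq> U" "vec.independent B" "U \<subseteq> vec.span B" "card B = vec.dim U"
    using vec.basis_exists by blast
  define comb where "comb = (\<lambda>u. \<Sum>v\<in>B. u v *s v)"
  have "vec.span B = U"
    by (rule vec.span_subspace) (use B assms in auto)
  then have U: "U = range comb"
    using vec.span_finite[of B] by (simp add: comb_def)
  have range_eq: "range comb = comb ` (B \<rightarrow>\<^sub>E UNIV)"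
  proof
    show "range comb \<subseteq> comb ` (B \<rightarrow>\<^sub>E UNIV)"
    proof
      fix x assume "x \<in> range comb"
      then obtain u where "x = comb u" by blast
      also have "comb u = comb (restrict u B)"
        unfolding comb_def by (rule sum.cong) auto
      finally show "x \<in> comb ` (B \<rightarrow>\<^sub>E UNIV)" by simp
    qed
  qed auto
  have indep: "\<forall>v\<in>B. u v = 0" if "(\<Sum>v\<in>B. u v *s v) = 0" for u
    using B(2) that vec.independent_explicit by blast
  have "inj_on comb (B \<rightarrow>\<^sub>E UNIV)"
  proof (rule inj_onI)
    fix c d assume c: "c \<in> B \<rightarrow>\<^sub>E UNIV" and d: "d \<in> B \<rightarrow>\<^sub>E UNIV" and "comb c = comb d"
    then have "(\<Sum>v\<in>B. (c v - d v) *s v) = 0"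
      unfolding comb_def by (simp add: vec.scale_left_diff_distrib sum_subtractf)
    then have "\<forall>v\<in>B. c v - d v = 0" by (rule indep)
    then show "c = d" by (intro PiE_ext[OF c d]) auto
  qed
  then have "card U = card (B \<rightarrow>\<^sub>E (UNIV :: 'a set))"
    unfolding U range_eq by (rule card_image)
  then show ?thesis using B(4) by (simp add: card_PiE)
qed

lemma two_le_card_field: "2 \<le> CARD('a::{field,finite})"
proof -
  have "card {0::'a, 1} \<le> CARD('a)" by (rule card_mono) auto
  then show ?thesis by simp
qed

lemma not_subset_zero_if_card_eq_power:
  fixes E :: "('a::{field,finite} ^ 'n) set"
  assumes "card E = CARD('a) ^ Suc n"
  shows "\<not> E \<subseteq> {0}"
proof
  assume "E \<subseteq> {0}"
  then have "card E \<le> 1" using card_mono[of "{0}" E] by simp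
  moreover have "CARD('a) \<le> CARD('a) ^ Suc n" by (simp add: self_le_power)
  ultimately show False using assms two_le_card_field[where 'a = 'a] by linarith
qed

definition lin_indep_tuple :: "(nat \<Rightarrow> 'a::field ^ 'n) \<Rightarrow> nat \<Rightarrow> bool" where
  "lin_indep_tuple b k \<longleftrightarrow> (\<forall>c. (\<Sum>i<k. c i *s b i) = 0 \<longrightarrow> (\<forall>i<k. c i = 0))"

definition tuple_span :: "(nat \<Rightarrow> 'a::field ^ 'n) \<Rightarrow> nat \<Rightarrow> ('a ^ 'n) set" where
  "tuple_span b k = range (\<lambda>c. \<Sum>i<k. c i *s b i)"

text \<open>Tuples are padded with zeros beyond position \<open>k\<close>, so that they form a finite set.\<close>

definition indep_tuples :: "(nat \<Rightarrow> ('a::field ^ 'n) set) \<Rightarrow> nat \<Rightarrow> (nat \<Rightarrow> 'a ^ 'n) set" where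
  "indep_tuples U k = {b. lin_indep_tuple b k \<and> (\<forall>i<k. b i \<in> U i) \<and> (\<forall>i\<ge>k. b i = 0)}"

lemma lin_indep_tupleD:
  "lin_indep_tuple b k \<Longrightarrow> (\<Sum>i<k. c i *s b i) = 0 \<Longrightarrow> i < k \<Longrightarrow> c i = 0"
  unfolding lin_indep_tuple_def by blast

lemma lin_indep_tuple_cong:
  "(\<And>i. i < k \<Longrightarrow> b i = b' i) \<Longrightarrow> lin_indep_tuple b k \<longleftrightarrow> lin_indep_tuple b' k"
  unfolding lin_indep_tuple_def by simp

lemma lin_indep_tuple_SucD:
  assumes indep: "lin_indep_tuple b (Suc k)"
  shows "lin_indep_tuple b k"
  unfolding lin_indep_tuple_def
proof (intro allI impI)
  fix c i assume "(\<Sum>i<k. c i *s b i) = 0" and "i < k"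
  then have "(\<Sum>i<Suc k. (c(k := 0)) i *s b i) = 0" by simp
  then have "(c(k := 0)) i = 0" using \<open>i < k\<close> by (intro lin_indep_tupleD[OF indep]) auto
  then show "c i = 0" using \<open>i < k\<close> by simp
qed

lemma lin_indep_tuple_upd_iff:
  assumes indep: "lin_indep_tuple b k"
  shows "lin_indep_tuple (b(k := v)) (Suc k) \<longleftrightarrow> v \<notin> tuple_span b k"
proof
  assume indep': "lin_indep_tuple (b(k := v)) (Suc k)"
  show "v \<notin> tuple_span b k"
  proof
    assume "v \<in> tuple_span b k"
    then obtain c where v: "v = (\<Sum>i<k. c i *s b i)" unfolding tuple_span_def by auto
    have "(\<Sum>i<Suc k. (c(k := -1)) i *s (b(k := v)) i) = 0" by (simp add: v)
    then have "(c(k := -1)) k = 0" by (rule lin_indep_tupleD[OF indep']) simp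
    then show False by simp
  qed
next
  assume v: "v \<notin> tuple_span b k"
  show "lin_indep_tuple (b(k := v)) (Suc k)"
    unfolding lin_indep_tuple_def
  proof (rule allI, rule impI)
    fix c assume c: "(\<Sum>i<Suc k. c i *s (b(k := v)) i) = 0"
    then have sum: "(\<Sum>i<k. c i *s b i) + c k *s v = 0" by simp
    have ck: "c k = 0"
    proof (rule ccontr)
      assume "c k \<noteq> 0"
      have "c k *s v = - (\<Sum>i<k. c i *s b i)"
        using sum by (simp add: eq_neg_iff_add_eq_0 add.commute)
      then have "inverse (c k) *s (c k *s v) = (- inverse (c k)) *s (\<Sum>i<k. c i *s b i)"
        by simp
      then have "v = (- inverse (c k)) *s (\<Sum>i<k. c i *s b i)"
        using \<open>c k \<noteq> 0\<close> by (simp add: vec.scale_scale)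
      also have "\<dots> = (\<Sum>i<k. (- inverse (c k) * c i) *s b i)"
        by (simp add: vec.scale_sum_right)
      finally have "v \<in> tuple_span b k"
        unfolding tuple_span_def by (rule range_eqI[where x = "\<lambda>i. - inverse (c k) * c i"])
      with v show False by contradiction
    qed
    then have "\<forall>i<k. c i = 0" using sum lin_indep_tupleD[OF indep] by simp
    with ck show "\<forall>i<Suc k. c i = 0" using less_Suc_eq by auto
  qed
qed

lemma card_tuple_span:
  fixes b :: "nat \<Rightarrow> 'a::{field,finite} ^ 'n"
  assumes indep: "lin_indep_tuple b k"
  shows "card (tuple_span b k) = CARD('a) ^ k"
proof -
  define comb where "comb = (\<lambda>c. \<Sum>i<k. c i *s b i)"
  have range_eq: "tuple_span b k = comb ` ({..<k} \<rightarrow>\<^sub>E UNIV)"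
  proof
    show "tuple_span b k \<subseteq> comb ` ({..<k} \<rightarrow>\<^sub>E UNIV)"
    proof
      fix x assume "x \<in> tuple_span b k"
      then obtain c where "x = comb c" unfolding tuple_span_def comb_def by blast
      also have "comb c = comb (restrict c {..<k})"
        unfolding comb_def by (rule sum.cong) auto
      finally show "x \<in> comb ` ({..<k} \<rightarrow>\<^sub>E UNIV)" by simp
    qed
  qed (auto simp: tuple_span_def comb_def)
  have "inj_on comb ({..<k} \<rightarrow>\<^sub>E UNIV)"
  proof (rule inj_onI)
    fix c d assume c: "c \<in> {..<k} \<rightarrow>\<^sub>E UNIV" and d: "d \<in> {..<k} \<rightarrow>\<^sub>E UNIV" and "comb c = comb d"
    then have "(\<Sum>i<k. (c i - d i) *s b i) = 0"
      unfolding comb_def by (simp add: vec.scale_left_diff_distrib sum_subtractf)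
    then have "\<forall>i<k. c i - d i = 0" using lin_indep_tupleD[OF indep, of "\<lambda>i. c i - d i"] by blast
    then show "c = d" by (intro PiE_ext[OF c d]) auto
  qed
  then show ?thesis unfolding range_eq by (simp add: card_image card_PiE)
qed

lemma tuple_span_subset:
  "vec.subspace U \<Longrightarrow> (\<And>i. i < k \<Longrightarrow> b i \<in> U) \<Longrightarrow> tuple_span b k \<subseteq> U"
  unfolding tuple_span_def by (auto intro!: vec.subspace_sum vec.subspace_scale)

lemma finite_indep_tuples: "finite (indep_tuples U k :: (nat \<Rightarrow> 'a::{field,finite} ^ 'n) set)"
proof (rule finite_subset)
  show "indep_tuples U k \<subseteq> {b. \<forall>i. (i \<in> {..<k} \<longrightarrow> b i \<in> UNIV) \<and> (i \<notin> {..<k} \<longrightarrow> b i = 0)}"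
    unfolding indep_tuples_def by auto
qed (rule finite_set_of_finite_funs; simp)

lemma indep_tuples_Suc:
  "indep_tuples U (Suc k) =
     (\<lambda>(b, v). b(k := v)) ` (SIGMA b:indep_tuples U k. U k - tuple_span b k)"
proof (intro equalityI subsetI)
  fix x assume x: "x \<in> indep_tuples U (Suc k)"
  define b where "b = x(k := 0)"
  have "lin_indep_tuple b k"
    using x lin_indep_tuple_SucD lin_indep_tuple_cong[of k b x] unfolding indep_tuples_def b_def by auto
  moreover have "x = b(k := x k)" unfolding b_def by simp
  ultimately have "x k \<notin> tuple_span b k" "b \<in> indep_tuples U k"
    using x lin_indep_tuple_upd_iff[of b k "x k"] unfolding indep_tuples_def b_def by auto
  with \<open>x = b(k := x k)\<close> x show "x \<in> (\<lambda>(b, v). b(k := v)) ` (SIGMA b:indep_tuples U k. U k - tuple_span b k)"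
    unfolding indep_tuples_def by (intro image_eqI[of _ _ "(b, x k)"]) auto
next
  fix x assume "x \<in> (\<lambda>(b, v). b(k := v)) ` (SIGMA b:indep_tuples U k. U k - tuple_span b k)"
  then obtain b v where x: "x = b(k := v)" and b: "b \<in> indep_tuples U k"
    and v: "v \<in> U k" "v \<notin> tuple_span b k" by auto
  then show "x \<in> indep_tuples U (Suc k)"
    using lin_indep_tuple_upd_iff[of b k v] unfolding indep_tuples_def by (auto simp: less_Suc_eq)
qed

lemma inj_on_upd_indep_tuples:
  "inj_on (\<lambda>(b, v). b(k := v)) (SIGMA b:indep_tuples U k. W b)"
proof (rule inj_onI, clarsimp)
  fix b v b' v' assume "b \<in> indep_tuples U k" "b' \<in> indep_tuples U k" and eq: "b(k := v) = b'(k := v')"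
  then have "b k = 0" "b' k = 0" unfolding indep_tuples_def by auto
  have "b = b'"
  proof
    fix i show "b i = b' i"
      using fun_cong[OF eq, of i] \<open>b k = 0\<close> \<open>b' k = 0\<close> by (cases "i = k") auto
  qed
  moreover have "v = v'" using fun_cong[OF eq, of k] by simp
  ultimately show "b = b' \<and> v = v'" ..
qed

lemma card_indep_tuples:
  fixes U :: "nat \<Rightarrow> ('a::{field,finite} ^ 'n) set"
  assumes "k \<le> K"
    and chain: "\<And>i j. i \<le> j \<Longrightarrow> j < K \<Longrightarrow> U i \<subseteq> U j"
    and subspace: "\<And>i. i < K \<Longrightarrow> vec.subspace (U i)"
  shows "card (indep_tuples U k) = (\<Prod>i<k. card (U i) - CARD('a) ^ i)"
  using assms(1)
proof (induction k)
  case 0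
  have "indep_tuples U 0 = {\<lambda>_. 0}" unfolding indep_tuples_def lin_indep_tuple_def by auto
  then show ?case by simp
next
  case (Suc k)
  have "card (indep_tuples U (Suc k)) = (\<Sum>b\<in>indep_tuples U k. card (U k - tuple_span b k))"
    unfolding indep_tuples_Suc
    by (simp add: card_image[OF inj_on_upd_indep_tuples] card_SigmaI finite_indep_tuples)
  also have "\<dots> = (\<Sum>b\<in>indep_tuples U k. card (U k) - CARD('a) ^ k)"
  proof (rule sum.cong)
    fix b assume b: "b \<in> indep_tuples U k"
    have "b i \<in> U k" if "i < k" for i
      using b chain[of i k] Suc.prems that unfolding indep_tuples_def by auto
    then have "tuple_span b k \<subseteq> U k"
      using Suc.prems by (intro tuple_span_subset subspace) auto
    then show "card (U k - tuple_span b k) = card (U k) - CARD('a) ^ k"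
      using b card_tuple_span[of b k] by (simp add: card_Diff_subset indep_tuples_def)
  qed simp
  finally show ?case using Suc by simp
qed

section \<open>An irreducible cubic over a finite field\<close>

lemma degree_1_poly_has_root:
  fixes p :: "'a::field poly"
  assumes "degree p = 1"
  shows "\<exists>x. poly p x = 0"
proof -
  obtain a b where "p = [:b, a:]" "a \<noteq> 0" using degree1_coeffs[OF assms] .
  then have "poly p (- b / a) = 0" by (simp add: field_simps)
  then show ?thesis ..
qed

lemma irreducible_cubic_if_no_root:
  fixes p :: "'a::field poly"
  assumes deg: "degree p = 3" and no_root: "\<And>x. poly p x \<noteq> 0"
  shows "irreducible p"
proof (rule irreducibleI)
  show "p \<noteq> 0" using deg by auto
  then show "\<not> is_unit p" using deg by (simp add: is_unit_iff_degree)
  fix a b assume p: "p = a * b"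
  then have "a \<noteq> 0" "b \<noteq> 0" using deg by auto
  then have "degree a + degree b = 3" using p deg by (simp add: degree_mult_eq)
  moreover have "degree a \<noteq> 1" "degree b \<noteq> 1"
    using degree_1_poly_has_root no_root p by (metis mult_eq_0_iff poly_mult)+
  ultimately have "degree a = 0 \<or> degree b = 0" by arith
  then show "is_unit a \<or> is_unit b" using \<open>a \<noteq> 0\<close> \<open>b \<noteq> 0\<close> by (auto simp: is_unit_iff_degree)
qed

text \<open>There are \<open>q\<^sup>3\<close> monic cubics but fewer products \<open>(x - r) (x\<^sup>2 + u x + v)\<close>, as
  \<open>x (x\<^sup>2 - x) = (x - 1) x\<^sup>2\<close>; so some monic cubic has no root.\<close>

lemma exists_prime_cubic: "\<exists>f :: 'a::{field,finite} poly. degree f = 3 \<and> prime_elem f"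
proof -
  define monic where "monic = (\<lambda>(a::'a, b::'a, c::'a). [:c, b, a, 1:])"
  define split where "split = (\<lambda>(r::'a, u::'a, v::'a). [:-r, 1:] * [:v, u, 1:])"
  have "split (0, -1, 0) = split (1, 0, 0)" by (simp add: split_def)
  then have "\<not> inj split" unfolding inj_def by fastforce
  have "card (range split) < card (range monic)"
  proof -
    have "card (range split) \<le> CARD('a \<times> 'a \<times> 'a)" by (rule card_image_le) simp
    moreover have "card (range split) \<noteq> CARD('a \<times> 'a \<times> 'a)"
      using \<open>\<not> inj split\<close> inj_on_iff_eq_card[of UNIV split] by simp
    moreover have "inj monic" unfolding inj_def monic_def by auto
    ultimately show ?thesis by (simp add: card_image)
  qed
  then have "\<not> range monic \<subseteq> range split" using card_mono[of "range split" "range monic"] by auto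
  then obtain a b c where not_split: "[:c, b, a, 1:] \<notin> range split" unfolding monic_def by auto
  define m where "m = [:c, b, a, 1:]"
  have deg: "degree m = 3" by (simp add: m_def)
  have "poly m x \<noteq> 0" for x
  proof
    assume "poly m x = 0"
    then obtain g where g: "m = [:-x, 1:] * g" by (auto simp: poly_eq_0_iff_dvd dvd_def)
    then have "g \<noteq> 0" using deg by auto
    have "degree m = degree [:-x, 1:] + degree g"
      unfolding g using \<open>g \<noteq> 0\<close> by (intro degree_mult_eq) auto
    then have "degree g = 2" using deg by simp
    then obtain u v w where g_eq: "g = [:w, v, u:]" and "u \<noteq> 0" by (rule degree2_coeffs)
    have "u = lead_coeff m" using g \<open>u \<noteq> 0\<close> unfolding g_eq by (simp add: lead_coeff_mult)
    then have "m = split (x, v, w)" using g unfolding g_eq split_def by (simp add: m_def)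
    with not_split show False unfolding m_def by blast
  qed
  then have "irreducible m" by (rule irreducible_cubic_if_no_root[OF deg])
  then show ?thesis using deg field_poly_irreducible_imp_prime by blast
qed

section \<open>A Desarguesian spread of planes\<close>

definition polys_deg_lt_3 :: "'a::zero poly set" where
  "polys_deg_lt_3 = {X. degree X < 3}"

lemma polys_deg_lt_3_eq_pCons: "X \<in> polys_deg_lt_3 \<Longrightarrow> X = [:coeff X 0, coeff X 1, coeff X 2:]"
  unfolding polys_deg_lt_3_def
  by (rule poly_eqI) (auto simp: coeff_pCons coeff_eq_0 numeral_2_eq_2 split: nat.splits)

lemma pCons_in_polys_deg_lt_3: "[:a, b, c:] \<in> polys_deg_lt_3"
proof -
  have "degree [:a, b, c:] \<le> 2" by (rule degree_le) (auto simp: coeff_pCons split: nat.splits)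
  then show ?thesis unfolding polys_deg_lt_3_def by simp
qed

lemma polys_deg_lt_3_eq_range: "polys_deg_lt_3 = range (\<lambda>(a, b, c). [:a, b, c:])"
proof
  show "polys_deg_lt_3 \<subseteq> range (\<lambda>(a, b, c). [:a, b, c:])"
  proof
    fix X assume "X \<in> polys_deg_lt_3"
    then have "X = (\<lambda>(a, b, c). [:a, b, c:]) (coeff X 0, coeff X 1, coeff X 2)"
      using polys_deg_lt_3_eq_pCons by simp
    then show "X \<in> range (\<lambda>(a, b, c). [:a, b, c:])" by (rule range_eqI)
  qed
qed (auto simp: pCons_in_polys_deg_lt_3)

lemma card_polys_deg_lt_3: "card (polys_deg_lt_3 :: 'a::{field,finite} poly set) = CARD('a) ^ 3"
proof -
  have "inj (\<lambda>(a::'a, b::'a, c::'a). [:a, b, c:])" unfolding inj_def by auto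
  then show ?thesis unfolding polys_deg_lt_3_eq_range by (simp add: card_image power3_eq_cube)
qed

lemma finite_polys_deg_lt_3: "finite (polys_deg_lt_3 :: 'a::{zero,finite} poly set)"
  unfolding polys_deg_lt_3_eq_range by simp

lemma zero_in_polys_deg_lt_3: "0 \<in> polys_deg_lt_3"
  unfolding polys_deg_lt_3_def by simp

lemma add_in_polys_deg_lt_3: "X \<in> polys_deg_lt_3 \<Longrightarrow> Y \<in> polys_deg_lt_3 \<Longrightarrow> X + Y \<in> polys_deg_lt_3"
  unfolding polys_deg_lt_3_def using degree_add_le_max[of X Y] by auto

lemma diff_in_polys_deg_lt_3:
  "X \<in> polys_deg_lt_3 \<Longrightarrow> Y \<in> polys_deg_lt_3 \<Longrightarrow> X - Y \<in> (polys_deg_lt_3 :: 'a::ab_group_add poly set)"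
  unfolding polys_deg_lt_3_def using degree_diff_le[of X 2 Y] by auto

lemma monom_in_polys_deg_lt_3: "i < 3 \<Longrightarrow> monom a i \<in> polys_deg_lt_3"
  unfolding polys_deg_lt_3_def using degree_monom_le[of a i] by simp

lemma mod_in_polys_deg_lt_3: "degree f = 3 \<Longrightarrow> X mod f \<in> polys_deg_lt_3"
  unfolding polys_deg_lt_3_def using degree_mod_less[of f X] by fastforce

lemma polys_deg_lt_3_dvd_imp_zero:
  fixes f X :: "'a::idom poly"
  assumes "degree f = 3" "X \<in> polys_deg_lt_3" "f dvd X"
  shows "X = 0"
proof (rule ccontr)
  assume "X \<noteq> 0"
  then have "degree f \<le> degree X" using assms(3) by (rule dvd_imp_degree_le[rotated])
  with assms(1,2) show False unfolding polys_deg_lt_3_def by simp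
qed

text \<open>A frame \<open>b\<close> (a linearly independent 6-tuple) identifies the pairs \<open>(X, Y)\<close> of
  polynomials of degree below 3 with vectors; for an irreducible cubic \<open>f\<close> these
  polynomials, multiplied modulo \<open>f\<close>, form the field of order \<open>q\<^sup>3\<close>.\<close>

definition frame_vec :: "(nat \<Rightarrow> 'a::field ^ 'n) \<Rightarrow> 'a poly \<Rightarrow> 'a poly \<Rightarrow> 'a ^ 'n" where
  "frame_vec b X Y = coeff X 0 *s b 0 + coeff X 1 *s b 1 + coeff X 2 *s b 2
                   + coeff Y 0 *s b 3 + coeff Y 1 *s b 4 + coeff Y 2 *s b 5"

lemma frame_vec_diff: "frame_vec b (X - X') (Y - Y') = frame_vec b X Y - frame_vec b X' Y'"
  unfolding frame_vec_def by (simp add: vec.scale_left_diff_distrib algebra_simps)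

lemma frame_vec_zero [simp]: "frame_vec b 0 0 = 0"
  unfolding frame_vec_def by simp

lemma frame_vec_monom: "i < 3 \<Longrightarrow> frame_vec b (monom 1 i) 0 = b i"
  by (auto simp: frame_vec_def coeff_monom less_Suc_eq numeral_3_eq_3)

lemma frame_vec_in_subspace:
  "vec.subspace H \<Longrightarrow> (\<And>i. i < 6 \<Longrightarrow> b i \<in> H) \<Longrightarrow> frame_vec b X Y \<in> H"
  unfolding frame_vec_def by (intro vec.subspace_add vec.subspace_scale) auto

lemma sum_6_eq_frame_vec: "(\<Sum>i<6. c i *s b i) = frame_vec b [:c 0, c 1, c 2:] [:c 3, c 4, c 5:]"
  unfolding frame_vec_def by (simp add: eval_nat_numeral add.assoc)

lemma lin_indep_tuple_6_iff:
  "lin_indep_tuple b 6 \<longleftrightarrow>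
     (\<forall>X\<in>polys_deg_lt_3. \<forall>Y\<in>polys_deg_lt_3. frame_vec b X Y = 0 \<longrightarrow> X = 0 \<and> Y = 0)"
proof
  assume indep: "lin_indep_tuple b 6"
  show "\<forall>X\<in>polys_deg_lt_3. \<forall>Y\<in>polys_deg_lt_3. frame_vec b X Y = 0 \<longrightarrow> X = 0 \<and> Y = 0"
  proof (intro ballI impI)
    fix X Y :: "'a poly" assume X: "X \<in> polys_deg_lt_3" and Y: "Y \<in> polys_deg_lt_3"
      and zero: "frame_vec b X Y = 0"
    define c where "c = (\<lambda>i. if i < 3 then coeff X i else coeff Y (i - 3))"
    have "(\<Sum>i<6. c i *s b i) = frame_vec b X Y" unfolding sum_6_eq_frame_vec c_def
      by (subst (3) polys_deg_lt_3_eq_pCons[OF X], subst (3) polys_deg_lt_3_eq_pCons[OF Y])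
        (simp add: frame_vec_def)
    then have c0: "c i = 0" if "i < 6" for i using lin_indep_tupleD[OF indep] zero that by simp
    have "coeff X i = 0" "coeff Y i = 0" if "i < 3" for i
      using c0[of i] c0[of "i + 3"] that unfolding c_def by auto
    then show "X = 0 \<and> Y = 0"
      by (subst polys_deg_lt_3_eq_pCons[OF X], subst polys_deg_lt_3_eq_pCons[OF Y]) simp
  qed
next
  assume frame: "\<forall>X\<in>polys_deg_lt_3. \<forall>Y\<in>polys_deg_lt_3. frame_vec b X Y = 0 \<longrightarrow> X = 0 \<and> Y = 0"
  show "lin_indep_tuple b 6" unfolding lin_indep_tuple_def
  proof (rule allI, rule impI)
    fix c assume "(\<Sum>i<6. c i *s b i) = 0"
    then have "[:c 0, c 1, c 2:] = 0 \<and> [:c 3, c 4, c 5:] = 0"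
      using frame pCons_in_polys_deg_lt_3 unfolding sum_6_eq_frame_vec by blast
    then show "\<forall>i<6. c i = 0" by (auto simp: less_Suc_eq numeral_eq_Suc)
  qed
qed

lemma frame_vec_inj:
  assumes "lin_indep_tuple b 6"
    and "X \<in> polys_deg_lt_3" "Y \<in> polys_deg_lt_3" "X' \<in> polys_deg_lt_3" "Y' \<in> polys_deg_lt_3"
    and "frame_vec b X Y = frame_vec b X' Y'"
  shows "X = X' \<and> Y = Y'"
proof -
  have "frame_vec b (X - X') (Y - Y') = 0" using assms(6) by (simp add: frame_vec_diff)
  then have "X - X' = 0 \<and> Y - Y' = 0"
    using assms(1-5) diff_in_polys_deg_lt_3 unfolding lin_indep_tuple_6_iff by blast
  then show ?thesis by simp
qed

text \<open>In the coordinates given by \<open>frame_vec b\<close>, \<open>spread_plane f b g\<close> is the line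
  \<open>Y = g X\<close> and \<open>spread_plane_inf b\<close> the line \<open>X = 0\<close> of the plane over the field of
  order \<open>q\<^sup>3\<close>; these \<open>q\<^sup>3 + 1\<close> planes form a Desarguesian spread.\<close>

definition spread_plane :: "'a::field poly \<Rightarrow> (nat \<Rightarrow> 'a ^ 'n) \<Rightarrow> 'a poly \<Rightarrow> ('a ^ 'n) set" where
  "spread_plane f b g = (\<lambda>X. frame_vec b X ((g * X) mod f)) ` polys_deg_lt_3"

definition spread_plane_inf :: "(nat \<Rightarrow> 'a::field ^ 'n) \<Rightarrow> ('a ^ 'n) set" where
  "spread_plane_inf b = frame_vec b 0 ` polys_deg_lt_3"

definition spread :: "'a::field poly \<Rightarrow> (nat \<Rightarrow> 'a ^ 'n) \<Rightarrow> ('a ^ 'n) set set" where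
  "spread f b = spread_plane f b ` polys_deg_lt_3 \<union> {spread_plane_inf b}"

lemma zero_in_spread:
  assumes "E \<in> spread f b"
  shows "0 \<in> E"
proof -
  have "0 \<in> spread_plane f b g" for g
    unfolding spread_plane_def by (rule image_eqI[where x = 0]) (simp_all add: zero_in_polys_deg_lt_3)
  moreover have "0 \<in> spread_plane_inf b"
    unfolding spread_plane_inf_def by (rule image_eqI[where x = 0]) (simp_all add: zero_in_polys_deg_lt_3)
  ultimately show ?thesis using assms unfolding spread_def by blast
qed

lemma spread_plane_inter_spread_plane:
  assumes f: "degree f = 3" "prime_elem f" and indep: "lin_indep_tuple b 6"
    and g: "g \<in> polys_deg_lt_3" "g' \<in> polys_deg_lt_3" "g \<noteq> g'"
  shows "spread_plane f b g \<inter> spread_plane f b g' \<subseteq> {0}"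
proof
  fix v assume "v \<in> spread_plane f b g \<inter> spread_plane f b g'"
  then obtain X X' where X: "X \<in> polys_deg_lt_3" "v = frame_vec b X ((g * X) mod f)"
    and X': "X' \<in> polys_deg_lt_3" "v = frame_vec b X' ((g' * X') mod f)"
    unfolding spread_plane_def by auto
  have "X = X' \<and> (g * X) mod f = (g' * X') mod f"
    by (rule frame_vec_inj[OF indep X(1) mod_in_polys_deg_lt_3[OF f(1)] X'(1)
          mod_in_polys_deg_lt_3[OF f(1)]]) (use X X' in simp)
  then have "(g * X) mod f = (g' * X) mod f" by (elim conjE) simp
  then have "((g - g') * X) mod f = 0" by (simp add: left_diff_distrib poly_mod_diff_left)
  then have "f dvd (g - g') * X" by (simp add: dvd_eq_mod_eq_0)
  then have "f dvd g - g' \<or> f dvd X" using f(2) by (simp add: prime_elem_dvd_mult_iff)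
  then have "g - g' = 0 \<or> X = 0"
    using polys_deg_lt_3_dvd_imp_zero[OF f(1)] diff_in_polys_deg_lt_3[OF g(1,2)] X(1) by blast
  then have "X = 0" using g(3) by simp
  then show "v \<in> {0}" using X(2) by simp
qed

lemma spread_plane_inter_spread_plane_inf:
  assumes f: "degree f = 3" and indep: "lin_indep_tuple b 6"
  shows "spread_plane f b g \<inter> spread_plane_inf b \<subseteq> {0}"
proof
  fix v assume "v \<in> spread_plane f b g \<inter> spread_plane_inf b"
  then obtain X Y where X: "X \<in> polys_deg_lt_3" "v = frame_vec b X ((g * X) mod f)"
    and Y: "Y \<in> polys_deg_lt_3" "v = frame_vec b 0 Y"
    unfolding spread_plane_def spread_plane_inf_def by auto
  have "X = 0 \<and> (g * X) mod f = Y"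
    by (rule frame_vec_inj[OF indep X(1) mod_in_polys_deg_lt_3[OF f] zero_in_polys_deg_lt_3 Y(1)])
      (use X Y in simp)
  then show "v \<in> {0}" using X(2) by simp
qed

lemma spread_members_inter:
  assumes "degree f = 3" "prime_elem f" "lin_indep_tuple b 6"
    and "E \<in> spread f b" "E' \<in> spread f b" "E \<noteq> E'"
  shows "E \<inter> E' = {0}"
proof -
  consider (planes) g g' where "g \<in> polys_deg_lt_3" "g' \<in> polys_deg_lt_3"
      "E = spread_plane f b g" "E' = spread_plane f b g'"
    | (plane_inf) g where "E = spread_plane f b g" "E' = spread_plane_inf b"
    | (inf_plane) g where "E = spread_plane_inf b" "E' = spread_plane f b g"
    using assms(4-6) unfolding spread_def by blast
  then have "E \<inter> E' \<subseteq> {0}"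
  proof cases
    case planes
    then show ?thesis using assms(6) spread_plane_inter_spread_plane[OF assms(1-3)] by blast
  next
    case plane_inf
    then show ?thesis using spread_plane_inter_spread_plane_inf[OF assms(1,3)] by blast
  next
    case inf_plane
    then show ?thesis using spread_plane_inter_spread_plane_inf[OF assms(1,3)] by blast
  qed
  then show ?thesis using zero_in_spread assms(4,5) by blast
qed

lemma card_intersecting_inter_spread_le_1:
  fixes F :: "('a::{field,finite} ^ 'n) set set"
  assumes "degree f = 3" "prime_elem f" "lin_indep_tuple b 6"
    and intersecting: "\<And>E E'. E \<in> F \<Longrightarrow> E' \<in> F \<Longrightarrow> E \<inter> E' \<noteq> {0}"
  shows "card {E \<in> F. E \<in> spread f b} \<le> 1"
proof -
  have "E = E'" if "E \<in> F" "E \<in> spread f b" "E' \<in> F" "E' \<in> spread f b" for E E'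
    using spread_members_inter[OF assms(1-3) that(2,4)] intersecting[OF that(1,3)] by auto
  then show ?thesis by (auto simp: card_le_Suc0_iff_eq)
qed

text \<open>\<open>shear f g\<close> and \<open>swap_halves\<close> change the frame by the \<open>GF(q\<^sup>3)\<close>-linear maps
  \<open>(X, Y) \<mapsto> (X, g X + Y)\<close> and \<open>(X, Y) \<mapsto> (Y, X)\<close>; they move every spread member to
  \<open>spread_plane f b 0\<close>, so all planes lie in the spreads of equally many frames.\<close>

definition shear :: "'a::field poly \<Rightarrow> 'a poly \<Rightarrow> (nat \<Rightarrow> 'a ^ 'n) \<Rightarrow> nat \<Rightarrow> 'a ^ 'n" where
  "shear f g b i = (if i < 3 then frame_vec b (monom 1 i) ((g * monom 1 i) mod f) else b i)"

lemma frame_vec_shear: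
  assumes X: "X \<in> polys_deg_lt_3"
  shows "frame_vec (shear f g b) X Y = frame_vec b X ((g * X) mod f + Y)"
proof -
  define m where "m i = (g * monom 1 i) mod f" for i
  have X_eq: "X = smult (coeff X 0) (monom 1 0) + smult (coeff X 1) (monom 1 1)
      + smult (coeff X 2) (monom 1 2)"
    by (subst polys_deg_lt_3_eq_pCons[OF X]) (simp add: monom_0 monom_Suc eval_nat_numeral)
  have gX: "(g * X) mod f = smult (coeff X 0) (m 0) + smult (coeff X 1) (m 1) + smult (coeff X 2) (m 2)"
    unfolding m_def
    by (subst X_eq) (simp only: distrib_left mult_smult_right poly_mod_add_left mod_smult_left)
  have shear_eq: "shear f g b 0 = frame_vec b (monom 1 0) (m 0)"
    "shear f g b 1 = frame_vec b (monom 1 1) (m 1)" "shear f g b 2 = frame_vec b (monom 1 2) (m 2)"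
    "shear f g b 3 = b 3" "shear f g b 4 = b 4" "shear f g b 5 = b 5"
    unfolding shear_def m_def by simp_all
  show ?thesis
    unfolding gX
    by (subst frame_vec_def, simp only: shear_eq)
      (simp add: frame_vec_def coeff_monom vec.scale_left_distrib vec.scale_right_distrib
        vec.scale_scale algebra_simps)
qed

lemma spread_plane_shear: "spread_plane f (shear f h b) g = spread_plane f b (h + g)"
  unfolding spread_plane_def
  by (rule image_cong) (simp_all add: frame_vec_shear distrib_right poly_mod_add_left)

lemma shear_uminus_shear [simp]: "shear f (- g) (shear f g b) = b"
proof
  fix i
  show "shear f (- g) (shear f g b) i = b i"
  proof (cases "i < 3")
    case True
    then have "shear f (- g) (shear f g b) i
        = frame_vec b (monom 1 i) ((g * monom 1 i) mod f + (- g * monom 1 i) mod f)"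
      by (simp add: shear_def[of f "- g"] frame_vec_shear monom_in_polys_deg_lt_3)
    also have "\<dots> = b i" using True by (simp add: frame_vec_monom)
    finally show ?thesis .
  qed (simp add: shear_def)
qed

lemma shear_shear_uminus [simp]: "shear f g (shear f (- g) b) = b"
  using shear_uminus_shear[of f "- g" b] by simp

definition swap_halves :: "(nat \<Rightarrow> 'a ^ 'n) \<Rightarrow> nat \<Rightarrow> 'a::zero ^ 'n" where
  "swap_halves b i = (if i < 3 then b (i + 3) else if i < 6 then b (i - 3) else 0)"

lemma frame_vec_swap_halves: "frame_vec (swap_halves b) X Y = frame_vec b Y X"
  unfolding frame_vec_def swap_halves_def by (simp add: algebra_simps)

lemma swap_halves_swap_halves: "(\<And>i. 6 \<le> i \<Longrightarrow> b i = 0) \<Longrightarrow> swap_halves (swap_halves b) = b"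
  unfolding swap_halves_def by (rule ext) auto

lemma spread_plane_swap_halves: "spread_plane f (swap_halves b) 0 = spread_plane_inf b"
  unfolding spread_plane_def spread_plane_inf_def by (simp add: frame_vec_swap_halves)

lemma spread_plane_inf_swap_halves: "spread_plane_inf (swap_halves b) = spread_plane f b 0"
  unfolding spread_plane_def spread_plane_inf_def by (simp add: frame_vec_swap_halves)

abbreviation frames :: "('a::field ^ 'n) set \<Rightarrow> (nat \<Rightarrow> 'a ^ 'n) set" where
  "frames H \<equiv> indep_tuples (\<lambda>_. H) 6"

lemma shear_in_frames:
  assumes f: "degree f = 3" and H: "vec.subspace H" and b: "b \<in> frames H"
  shows "shear f g b \<in> frames H"
proof -
  have in_H: "\<And>i. i < 6 \<Longrightarrow> b i \<in> H" and indep: "lin_indep_tuple b 6"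
    using b unfolding indep_tuples_def by auto
  have "lin_indep_tuple (shear f g b) 6"
    unfolding lin_indep_tuple_6_iff
  proof (intro ballI impI)
    fix X Y assume X: "X \<in> polys_deg_lt_3" and Y: "Y \<in> polys_deg_lt_3"
      and "frame_vec (shear f g b) X Y = 0"
    then have "frame_vec b X ((g * X) mod f + Y) = frame_vec b 0 0" by (simp add: frame_vec_shear)
    then have "X = 0 \<and> (g * X) mod f + Y = 0"
      using frame_vec_inj[OF indep X add_in_polys_deg_lt_3[OF mod_in_polys_deg_lt_3[OF f] Y]]
        zero_in_polys_deg_lt_3 by blast
    then show "X = 0 \<and> Y = 0" by auto
  qed
  then show ?thesis
    using b frame_vec_in_subspace[OF H in_H] unfolding indep_tuples_def shear_def by auto
qed

lemma swap_halves_in_frames: "b \<in> frames H \<Longrightarrow> swap_halves b \<in> frames H"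
  unfolding indep_tuples_def lin_indep_tuple_6_iff frame_vec_swap_halves
  by (auto simp: swap_halves_def frame_vec_swap_halves)

lemma frames_with_spread_plane_zero:
  fixes H E :: "('a::{field,finite} ^ 'n) set"
  assumes f: "degree f = 3" and E: "vec.subspace E" "E \<subseteq> H" "card E = CARD('a) ^ 3"
  shows "{b \<in> frames H. spread_plane f b 0 = E} = indep_tuples (\<lambda>i. if i < 3 then E else H) 6"
proof (intro equalityI subsetI)
  fix b assume b: "b \<in> {b \<in> frames H. spread_plane f b 0 = E}"
  have "b i \<in> E" if "i < 3" for i
  proof -
    have "b i = frame_vec b (monom 1 i) 0" using frame_vec_monom[OF that] by (rule sym)
    also have "\<dots> \<in> spread_plane f b 0"
      unfolding spread_plane_def
      by (rule image_eqI[where x = "monom 1 i"]) (simp_all add: monom_in_polys_deg_lt_3 that)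
    finally show ?thesis using b by simp
  qed
  then show "b \<in> indep_tuples (\<lambda>i. if i < 3 then E else H) 6"
    using b unfolding indep_tuples_def by auto
next
  fix b assume b: "b \<in> indep_tuples (\<lambda>i. if i < 3 then E else H) 6"
  then have in_E: "b i \<in> E" if "i < 3" for i
    using that unfolding indep_tuples_def by (auto dest: spec[of _ i])
  have indep: "lin_indep_tuple b 6" using b unfolding indep_tuples_def by auto
  have "spread_plane f b 0 \<subseteq> E"
    unfolding spread_plane_def frame_vec_def using in_E E(1)
    by (auto intro!: vec.subspace_add vec.subspace_scale)
  moreover have "inj_on (\<lambda>X. frame_vec b X ((0 * X) mod f)) polys_deg_lt_3"
    using frame_vec_inj[OF indep _ zero_in_polys_deg_lt_3 _ zero_in_polys_deg_lt_3]
    by (auto intro!: inj_onI)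
  then have "card (spread_plane f b 0) = card E"
    unfolding spread_plane_def using E(3) by (simp add: card_image card_polys_deg_lt_3)
  ultimately have "spread_plane f b 0 = E" by (intro card_subset_eq) auto
  then show "b \<in> {b \<in> frames H. spread_plane f b 0 = E}"
    using b E(2) unfolding indep_tuples_def by (auto split: if_splits)
qed

section \<open>The Erdos-Ko-Rado bound for planes of a 6-space\<close>

lemma card_frames_with_spread_plane:
  assumes "degree f = 3" "vec.subspace H"
  shows "card {b \<in> frames H. spread_plane f b g = E} = card {b \<in> frames H. spread_plane f b 0 = E}"
proof -
  have "bij_betw (shear f g) {b \<in> frames H. spread_plane f b g = E} {b \<in> frames H. spread_plane f b 0 = E}"
    by (rule bij_betw_byWitness[where f' = "shear f (- g)"])
      (auto simp: shear_in_frames[OF assms] spread_plane_shear)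
  then show ?thesis by (rule bij_betw_same_card)
qed

lemma card_frames_with_spread_plane_inf:
  "card {b \<in> frames H. spread_plane_inf b = E} = card {b \<in> frames H. spread_plane f b 0 = E}"
proof -
  have "b i = 0" if "b \<in> frames H" "6 \<le> i" for b :: "nat \<Rightarrow> 'a ^ 'b" and i
    using that unfolding indep_tuples_def by auto
  then have "bij_betw swap_halves {b \<in> frames H. spread_plane_inf b = E} {b \<in> frames H. spread_plane f b 0 = E}"
    by (intro bij_betw_byWitness[where f' = swap_halves])
      (auto simp: swap_halves_swap_halves swap_halves_in_frames
        spread_plane_swap_halves spread_plane_inf_swap_halves[where f = f])
  then show ?thesis by (rule bij_betw_same_card)
qed

lemma card_frames_with_spread_member:
  fixes H E :: "('a::{field,finite} ^ 'n) set"
  assumes f: "degree f = 3" "prime_elem f" and H: "vec.subspace H"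
    and E: "vec.subspace E" "E \<subseteq> H" "card E = CARD('a) ^ 3"
  shows "card {b \<in> frames H. E \<in> spread f b}
    = (CARD('a) ^ 3 + 1) * card (indep_tuples (\<lambda>i. if i < 3 then E else H) 6)"
proof -
  define A where "A g = {b \<in> frames H. spread_plane f b g = E}" for g
  define A_inf where "A_inf = {b \<in> frames H. spread_plane_inf b = E}"
  have finite: "finite (A g)" "finite A_inf" for g
    unfolding A_def A_inf_def by (auto intro: finite_subset[OF _ finite_indep_tuples])
  have "\<not> E \<subseteq> {0}" using not_subset_zero_if_card_eq_power[of E 2] E(3) by simp
  have disjoint: "A g \<inter> A g' = {}"
    if "g \<in> polys_deg_lt_3" "g' \<in> polys_deg_lt_3" "g \<noteq> g'" for g g'
  proof (intro equals0I)
    fix b assume "b \<in> A g \<inter> A g'"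
    then have "lin_indep_tuple b 6" "spread_plane f b g = E" "spread_plane f b g' = E"
      unfolding A_def indep_tuples_def by auto
    then have "E \<subseteq> {0}" using spread_plane_inter_spread_plane[OF f _ that] by auto
    with \<open>\<not> E \<subseteq> {0}\<close> show False ..
  qed
  have disjoint_inf: "(\<Union>g\<in>polys_deg_lt_3. A g) \<inter> A_inf = {}"
  proof (intro equals0I)
    fix b assume "b \<in> (\<Union>g\<in>polys_deg_lt_3. A g) \<inter> A_inf"
    then obtain g where "lin_indep_tuple b 6" "spread_plane f b g = E" "spread_plane_inf b = E"
      unfolding A_def A_inf_def indep_tuples_def by auto
    then have "E \<subseteq> {0}" using spread_plane_inter_spread_plane_inf[OF f(1)] by auto
    with \<open>\<not> E \<subseteq> {0}\<close> show False ..
  qed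
  have "(\<Sum>g\<in>polys_deg_lt_3. card (A g)) = (\<Sum>g\<in>(polys_deg_lt_3 :: 'a poly set). card (A 0))"
    unfolding A_def by (rule sum.cong, rule refl, rule card_frames_with_spread_plane[OF f(1) H])
  then have sum_A: "(\<Sum>g\<in>polys_deg_lt_3. card (A g)) = CARD('a) ^ 3 * card (A 0)"
    by (simp add: card_polys_deg_lt_3)
  have "{b \<in> frames H. E \<in> spread f b} = (\<Union>g\<in>polys_deg_lt_3. A g) \<union> A_inf"
    unfolding spread_def A_def A_inf_def by auto
  then have "card {b \<in> frames H. E \<in> spread f b} = (\<Sum>g\<in>polys_deg_lt_3. card (A g)) + card A_inf"
    by (simp add: card_Un_disjoint card_UN_disjoint finite finite_polys_deg_lt_3 disjoint disjoint_inf)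
  also have "\<dots> = (CARD('a) ^ 3 + 1) * card (A 0)"
    using card_frames_with_spread_plane_inf[of H E f] unfolding sum_A
    by (simp add: A_def A_inf_def algebra_simps)
  also have "A 0 = indep_tuples (\<lambda>i. if i < 3 then E else H) 6"
    unfolding A_def by (rule frames_with_spread_plane_zero[OF f(1) E])
  finally show ?thesis .
qed

lemma real_le_gauss_5_2:
  fixes n q :: nat
  assumes q: "2 \<le> q"
    and le: "n * ((q ^ 3 + 1) * (\<Prod>i<6. (if i < 3 then q ^ 3 else q ^ 6) - q ^ i))
      \<le> (\<Prod>i<6. q ^ 6 - q ^ i)"
  shows "real n \<le> gauss_5_2 q"
proof -
  define Q where "Q = real q"
  define D where "D = (Q^3 - 1) * (Q^3 - Q) * (Q^3 - Q^2) * (Q^6 - Q^3) * (Q^6 - Q^4) * (Q^6 - Q^5)"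
  define B where "B = (Q^6 - 1) * (Q^6 - Q) * (Q^6 - Q^2) * (Q^6 - Q^3) * (Q^6 - Q^4) * (Q^6 - Q^5)"
  have Q: "1 < Q" using q by (simp add: Q_def)
  have D_eq: "real (\<Prod>i<6. (if i < 3 then q ^ 3 else q ^ 6) - q ^ i) = D"
    and B_eq: "real (\<Prod>i<6. q ^ 6 - q ^ i) = B"
    using q by (simp_all add: D_def B_def Q_def eval_nat_numeral of_nat_diff power_increasing)
  have pow_less: "Q ^ i < Q ^ a" if "i < a" for i a using that Q by (rule power_strict_increasing)
  have pos: "0 < (Q^3 + 1) * D"
    unfolding D_def using Q pow_less[of 0 3] pow_less[of 1 3] pow_less[of 2 3] pow_less[of 3 6]
      pow_less[of 4 6] pow_less[of 5 6]
    by (intro mult_pos_pos) simp_all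
  have "1 < Q^2" using pow_less[of 0 2] by simp
  then have den: "Q^2 \<noteq> 1" "Q \<noteq> 1" using Q by linarith+
  have "(Q^5 - 1) * (Q^4 - 1) * ((Q^3 + 1) * D) = B * ((Q^2 - 1) * (Q - 1))"
    unfolding D_def B_def by algebra
  then have "gauss_5_2 q * ((Q^3 + 1) * D) = B"
    using den by (simp add: gauss_5_2_def Q_def[symmetric] times_divide_eq_left)
  moreover have "real n * ((Q^3 + 1) * D) \<le> B"
    using le[folded of_nat_le_iff[where 'a = real]]
    unfolding of_nat_mult of_nat_add of_nat_power of_nat_1 D_eq B_eq Q_def[symmetric] .
  ultimately have "real n * ((Q^3 + 1) * D) \<le> gauss_5_2 q * ((Q^3 + 1) * D)" by simp
  then show ?thesis using pos by (simp only: mult_le_cancel_right_pos)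
qed

lemma card_intersecting_planes_le:
  fixes H :: "('a::{field,finite} ^ 'n) set" and F :: "('a ^ 'n) set set"
  assumes H: "vec.subspace H" "card H = CARD('a) ^ 6"
    and planes: "\<And>E. E \<in> F \<Longrightarrow> vec.subspace E \<and> E \<subseteq> H \<and> card E = CARD('a) ^ 3"
    and intersecting: "\<And>E E'. E \<in> F \<Longrightarrow> E' \<in> F \<Longrightarrow> E \<inter> E' \<noteq> {0}"
  shows "real (card F) \<le> gauss_5_2 CARD('a)"
proof -
  obtain f :: "'a poly" where f: "degree f = 3" "prime_elem f" using exists_prime_cubic by blast
  define q where "q = CARD('a)"
  define N where "N = (\<Prod>i<6. (if i < 3 then q ^ 3 else q ^ 6) - q ^ i)"
  have fiber: "card {b \<in> frames H. E \<in> spread f b} = (q ^ 3 + 1) * N" if "E \<in> F" for E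
  proof -
    have "card {b \<in> frames H. E \<in> spread f b}
        = (q ^ 3 + 1) * card (indep_tuples (\<lambda>i. if i < 3 then E else H) 6)"
      using planes[OF that] unfolding q_def by (intro card_frames_with_spread_member[OF f H(1)]) auto
    also have "card (indep_tuples (\<lambda>i. if i < 3 then E else H) 6) = N"
      using planes[OF that] H unfolding q_def N_def
      by (subst card_indep_tuples[where K = 6]) (auto intro!: prod.cong)
    finally show ?thesis .
  qed
  have "card F * ((q ^ 3 + 1) * N) = (\<Sum>E\<in>F. card {b \<in> frames H. E \<in> spread f b})"
    using fiber by (simp only: sum.cong[OF refl] sum_constant of_nat_id)
  also have "\<dots> = (\<Sum>b\<in>frames H. card {E \<in> F. E \<in> spread f b})"
    by (rule sum_multicount_gen[symmetric]) (auto simp: finite_indep_tuples)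
  also have "\<dots> \<le> (\<Sum>b\<in>frames H. 1)"
  proof (rule sum_mono)
    fix b assume "b \<in> frames H"
    then show "card {E \<in> F. E \<in> spread f b} \<le> 1"
      using card_intersecting_inter_spread_le_1[of f b F] f intersecting
      unfolding indep_tuples_def by blast
  qed
  also have "\<dots> = card (frames H)" by simp
  also have "\<dots> = (\<Prod>i<6. q ^ 6 - q ^ i)"
    using H unfolding q_def by (subst card_indep_tuples[where K = 6]) auto
  finally show ?thesis unfolding q_def N_def by (rule real_le_gauss_5_2[OF two_le_card_field])
qed

section \<open>Flags of \<open>PG(6,q)\<close>\<close>

lemma proj_sub_subspace: "proj_sub k U \<Longrightarrow> vec.subspace U"
  unfolding proj_sub_def by simp

lemma card_proj_sub: "proj_sub k (U :: ('a::{field,finite} ^ 7) set) \<Longrightarrow> card U = CARD('a) ^ (k + 1)"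
  unfolding proj_sub_def using card_subspace[of U] by simp

lemma proj_sub_not_subset_zero: "proj_sub k U \<Longrightarrow> \<not> U \<subseteq> {0}"
  unfolding proj_sub_def using vec.dim_eq_0[of U] by simp

lemma point_inter_eq_zero:
  assumes P: "is_point P" and E: "vec.subspace E" "\<not> P \<subseteq> E"
  shows "P \<inter> E = {0}"
proof -
  have sub: "vec.subspace (P \<inter> E)" using P E(1) by (simp add: proj_sub_def vec.subspace_inter)
  have "vec.dim (P \<inter> E) = 0"
  proof (rule ccontr)
    assume "vec.dim (P \<inter> E) \<noteq> 0"
    then have "vec.dim P \<le> vec.dim (P \<inter> E)" using P unfolding proj_sub_def by linarith
    then have "P \<inter> E = P" using sub P unfolding proj_sub_def by (intro vec.subspace_dim_equal) auto
    with E(2) show False by blast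
  qed
  then show ?thesis using sub vec.subspace_0 by (auto simp: vec.dim_eq_0)
qed

lemma exists_hyperplane_complement:
  fixes p :: "'a::field ^ 7"
  assumes "p \<noteq> 0"
  obtains H' where "is_hyperplane H'" "p \<notin> H'" "\<And>v. \<exists>k. v - k *s p \<in> H'"
proof -
  have "vec.independent {p}" using assms by (simp add: vec.independent_insert)
  then obtain B where B: "p \<in> B" "vec.independent B" "UNIV \<subseteq> vec.span B"
    using vec.maximal_independent_subset_extend[of "{p}" UNIV] by auto
  have "vec.span B = UNIV" using B(3) by auto
  then have "card B = 7"
    using vec.dim_eq_card[of B UNIV] B(2) by (simp add: card_cart_basis)
  then have "card (B - {p}) = 6" using B(1) by (simp add: card_Diff_singleton)
  moreover have "vec.independent (B - {p})" using B(2) by (rule vec.independent_mono) auto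
  ultimately have "is_hyperplane (vec.span (B - {p}))"
    unfolding proj_sub_def by (simp add: vec.dim_eq_card_independent)
  moreover have "p \<notin> vec.span (B - {p})"
    using B(1,2) unfolding vec.dependent_def by blast
  moreover have "\<exists>k. v - k *s p \<in> vec.span (B - {p})" for v
  proof -
    have "v \<in> vec.span (insert p (B - {p}))" using B(1,3) insert_Diff by fastforce
    then show ?thesis unfolding vec.span_breakdown_eq .
  qed
  ultimately show ?thesis using that by blast
qed

lemma subspace_eq_if_inter_complement_eq:
  fixes S S' H' :: "('a::field ^ 'n) set"
  assumes complement: "\<And>v. \<exists>k. v - k *s p \<in> H'"
    and S: "vec.subspace S" "p \<in> S" and S': "vec.subspace S'" "p \<in> S'"
    and eq: "S \<inter> H' = S' \<inter> H'"
  shows "S = S'"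
proof -
  have "X \<subseteq> Y" if X: "vec.subspace X" "p \<in> X" and Y: "vec.subspace Y" "p \<in> Y"
    and XY: "X \<inter> H' \<subseteq> Y" for X Y
  proof
    fix v assume "v \<in> X"
    obtain k where "v - k *s p \<in> H'" using complement by blast
    moreover have "v - k *s p \<in> X" using X \<open>v \<in> X\<close> by (intro vec.subspace_diff vec.subspace_scale)
    ultimately have "v - k *s p \<in> Y" using XY by blast
    then have "(v - k *s p) + k *s p \<in> Y" using Y by (intro vec.subspace_add vec.subspace_scale)
    then show "v \<in> Y" by simp
  qed
  then show ?thesis using S S' eq by blast
qed

lemma card_eq_card_inter_complement:
  fixes S H' :: "('a::{field,finite} ^ 'n) set"
  assumes complement: "\<And>v. \<exists>k. v - k *s p \<in> H'" and H': "vec.subspace H'" "p \<notin> H'"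
    and S: "vec.subspace S" "p \<in> S"
  shows "card S = card (S \<inter> H') * CARD('a)"
proof -
  have "bij_betw (\<lambda>(h, k). h + k *s p) ((S \<inter> H') \<times> UNIV) S"
  proof (rule bij_betw_imageI)
    show "inj_on (\<lambda>(h, k). h + k *s p) ((S \<inter> H') \<times> UNIV)"
    proof (rule inj_onI, clarsimp)
      fix h k h' k' assume "h \<in> S" "h \<in> H'" "h' \<in> S" "h' \<in> H'" and eq: "h + k *s p = h' + k' *s p"
      from eq have "(k - k') *s p = h' - h" by (simp add: vec.scale_left_diff_distrib algebra_simps)
      also have "\<dots> \<in> H'" using H'(1) \<open>h' \<in> H'\<close> \<open>h \<in> H'\<close> by (rule vec.subspace_diff)
      finally have diff: "(k - k') *s p \<in> H'" .
      have "k = k'"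
      proof (rule ccontr)
        assume "k \<noteq> k'"
        then have "inverse (k - k') * (k - k') = 1" by simp
        then have "p = inverse (k - k') *s ((k - k') *s p)" by (simp only: vec.scale_scale vec.scale_one)
        also have "\<dots> \<in> H'" using diff H'(1) by (rule vec.subspace_scale[rotated])
        finally show False using H'(2) by contradiction
      qed
      then show "h = h' \<and> k = k'" using eq by simp
    qed
    show "(\<lambda>(h, k). h + k *s p) ` ((S \<inter> H') \<times> UNIV) = S"
    proof
      show "(\<lambda>(h, k). h + k *s p) ` ((S \<inter> H') \<times> UNIV) \<subseteq> S"
        using S by (auto intro: vec.subspace_add vec.subspace_scale)
      show "S \<subseteq> (\<lambda>(h, k). h + k *s p) ` ((S \<inter> H') \<times> UNIV)"
      proof
        fix v assume "v \<in> S"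
        obtain k where "v - k *s p \<in> H'" using complement by blast
        moreover have "v - k *s p \<in> S" using S \<open>v \<in> S\<close> by (intro vec.subspace_diff vec.subspace_scale)
        ultimately show "v \<in> (\<lambda>(h, k). h + k *s p) ` ((S \<inter> H') \<times> UNIV)"
          by (intro image_eqI[where x = "(v - k *s p, k)"]) auto
      qed
    qed
  qed
  then have "card ((S \<inter> H') \<times> (UNIV :: 'a set)) = card S" by (rule bij_betw_same_card)
  then show ?thesis by (simp add: card_cartesian_product)
qed

lemma inter_subset_if_inter_complement_trivial:
  fixes S S' H' P :: "('a::field ^ 'n) set"
  assumes complement: "\<And>v. \<exists>k. v - k *s p \<in> H'"
    and S: "vec.subspace S" "p \<in> S" and S': "vec.subspace S'" "p \<in> S'"
    and P: "vec.subspace P" "p \<in> P"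
    and trivial: "S \<inter> S' \<inter> H' \<subseteq> {0}"
  shows "S \<inter> S' \<subseteq> P"
proof
  fix v assume v: "v \<in> S \<inter> S'"
  obtain k where "v - k *s p \<in> H'" using complement by blast
  moreover have "v - k *s p \<in> S" "v - k *s p \<in> S'"
    using v S S' by (auto intro: vec.subspace_diff vec.subspace_scale)
  ultimately have "v - k *s p = 0" using trivial by blast
  then have "v = k *s p" by simp
  then show "v \<in> P" using P by (simp add: vec.subspace_scale)
qed

lemma indep_flag_setD:
  "indep_flag_set C \<Longrightarrow> (E, S) \<in> C \<Longrightarrow> is_plane E \<and> is_solid S \<and> E \<subseteq> S"
  unfolding indep_flag_set_def flag23_def by fastforce

lemma indep_flag_set_meets:
  assumes "indep_flag_set C" "(E, S) \<in> C" "(E', S') \<in> C"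
  shows "E \<inter> S' \<noteq> {0} \<or> E' \<inter> S \<noteq> {0}"
proof (rule ccontr)
  assume "\<not> ?thesis"
  then have disjoint: "E \<inter> S' = {0}" "E' \<inter> S = {0}" by auto
  have "(E, S) \<noteq> (E', S')"
  proof
    assume "(E, S) = (E', S')"
    then have "E \<inter> S = {0}" using disjoint(1) by simp
    then have "E \<subseteq> {0}" using indep_flag_setD[OF assms(1,2)] by blast
    then show False using indep_flag_setD[OF assms(1,2)] proj_sub_not_subset_zero[of 2 E] by simp
  qed
  then have "kneser_flag_adj (E, S) (E', S')"
    unfolding kneser_flag_adj_def proj_disjoint_def using disjoint by simp
  then show False using assms(1-3) unfolding indep_flag_set_def by blast
qed

lemma hyperplane_traces_not_disjoint:
  assumes "indep_flag_set C" "(E, S) \<in> C" "(E', S') \<in> C" "E = H \<inter> S" "E' = H \<inter> S'"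
  shows "\<not> proj_disjoint E E'"
proof -
  have "E \<inter> S' = E \<inter> E'" "E' \<inter> S = E \<inter> E'" using assms(4,5) by auto
  then show ?thesis using indep_flag_set_meets[OF assms(1-3)] unfolding proj_disjoint_def by simp
qed

lemma projected_solids_not_disjoint:
  assumes C: "indep_flag_set C" "(E, S) \<in> C" "(E', S') \<in> C"
    and P: "is_point P" "P \<subseteq> S" "\<not> P \<subseteq> E" "P \<subseteq> S'" "\<not> P \<subseteq> E'"
    and p: "p \<in> P" and complement: "\<And>v. \<exists>k. v - k *s p \<in> H'"
  shows "(S \<inter> H') \<inter> (S' \<inter> H') \<noteq> {0}"
proof
  assume "(S \<inter> H') \<inter> (S' \<inter> H') = {0}"
  then have "S \<inter> S' \<inter> H' \<subseteq> {0}" by auto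
  have flags: "is_plane E" "is_solid S" "E \<subseteq> S" "is_plane E'" "is_solid S'" "E' \<subseteq> S'"
    using indep_flag_setD[OF C(1,2)] indep_flag_setD[OF C(1,3)] by auto
  have "S \<inter> S' \<subseteq> P"
    using flags P p by (intro inter_subset_if_inter_complement_trivial[OF complement _ _ _ _ _ _
          \<open>S \<inter> S' \<inter> H' \<subseteq> {0}\<close>]) (auto simp: proj_sub_subspace)
  moreover have "P \<inter> E = {0}" "P \<inter> E' = {0}"
    using point_inter_eq_zero[OF P(1)] P(3,5) flags by (simp_all add: proj_sub_subspace)
  ultimately have "E \<inter> S' \<subseteq> {0}" "E' \<inter> S \<subseteq> {0}" using flags by auto
  moreover have "0 \<in> E \<inter> S'" "0 \<in> E' \<inter> S" using flags by (simp_all add: proj_sub_subspace vec.subspace_0)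
  ultimately show False using indep_flag_set_meets[OF C] by blast
qed

lemma solid_inter_hyperplane_complement:
  fixes S H' :: "('a::{field,finite} ^ 7) set"
  assumes H': "is_hyperplane H'" "p \<notin> H'" "\<And>v. \<exists>k. v - k *s p \<in> H'"
    and S: "is_solid S" "p \<in> S"
  shows "vec.subspace (S \<inter> H') \<and> S \<inter> H' \<subseteq> H' \<and> card (S \<inter> H') = CARD('a) ^ 3"
proof -
  have "card (S \<inter> H') * CARD('a) = CARD('a) ^ 3 * CARD('a)"
    using card_eq_card_inter_complement[OF H'(3) proj_sub_subspace[OF H'(1)] H'(2)
        proj_sub_subspace[OF S(1)] S(2)] card_proj_sub[OF S(1)]
    by (simp only: power_add power_one_right)
  moreover have "0 < CARD('a)" by (rule finite_UNIV_card_ge_0) simp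
  ultimately have "card (S \<inter> H') = CARD('a) ^ 3" by simp
  moreover have "vec.subspace (S \<inter> H')"
    using proj_sub_subspace[OF S(1)] proj_sub_subspace[OF H'(1)] by (rule vec.subspace_inter)
  ultimately show ?thesis by simp
qed

lemma card_solids_through_point_le:
  fixes C :: "(('a::{field,finite} ^ 7) set \<times> ('a ^ 7) set) set"
  assumes C: "indep_flag_set C" and P: "is_point P"
  shows "real (card {S. \<exists>E. (E, S) \<in> C \<and> P \<subseteq> S \<and> \<not> P \<subseteq> E}) \<le> gauss_5_2 CARD('a)"
proof -
  define \<S> where "\<S> = {S. \<exists>E. (E, S) \<in> C \<and> P \<subseteq> S \<and> \<not> P \<subseteq> E}"
  obtain p where p: "p \<in> P" "p \<noteq> 0" using proj_sub_not_subset_zero[OF P] by blast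
  obtain H' where H': "is_hyperplane H'" "p \<notin> H'" "\<And>v. \<exists>k. v - k *s p \<in> H'"
    using exists_hyperplane_complement[OF p(2)] by blast
  have solid: "is_solid S" "vec.subspace S" "p \<in> S" if S: "S \<in> \<S>" for S
  proof -
    obtain E where E: "(E, S) \<in> C" "P \<subseteq> S" using S unfolding \<S>_def by blast
    show "is_solid S" using indep_flag_setD[OF C E(1)] by simp
    then show "vec.subspace S" by (rule proj_sub_subspace)
    show "p \<in> S" using E(2) p(1) by blast
  qed
  have "inj_on (\<lambda>S. S \<inter> H') \<S>"
  proof (rule inj_onI)
    fix S S' assume S: "S \<in> \<S>" and S': "S' \<in> \<S>" and eq: "S \<inter> H' = S' \<inter> H'"
    show "S = S'"
      by (rule subspace_eq_if_inter_complement_eq[OF H'(3) solid(2,3)[OF S] solid(2,3)[OF S'] eq])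
  qed
  moreover have "real (card ((\<lambda>S. S \<inter> H') ` \<S>)) \<le> gauss_5_2 CARD('a)"
  proof (rule card_intersecting_planes_le)
    show "vec.subspace H'" "card H' = CARD('a) ^ 6"
      using proj_sub_subspace[OF H'(1)] card_proj_sub[OF H'(1)] by simp_all
    show "vec.subspace X \<and> X \<subseteq> H' \<and> card X = CARD('a) ^ 3" if X: "X \<in> (\<lambda>S. S \<inter> H') ` \<S>" for X
    proof -
      obtain S where S: "S \<in> \<S>" and X_eq: "X = S \<inter> H'" using X by blast
      show ?thesis unfolding X_eq by (rule solid_inter_hyperplane_complement[OF H' solid(1,3)[OF S]])
    qed
    show "X \<inter> Y \<noteq> {0}" if XY: "X \<in> (\<lambda>S. S \<inter> H') ` \<S>" "Y \<in> (\<lambda>S. S \<inter> H') ` \<S>" for X Y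
    proof -
      obtain E S E' S' where XY_eq: "X = S \<inter> H'" "Y = S' \<inter> H'"
        and flags: "(E, S) \<in> C" "P \<subseteq> S" "\<not> P \<subseteq> E" "(E', S') \<in> C" "P \<subseteq> S'" "\<not> P \<subseteq> E'"
        using XY unfolding \<S>_def by blast
      show ?thesis unfolding XY_eq
        by (rule projected_solids_not_disjoint[OF C flags(1,4) P flags(2,3,5,6) p(1) H'(3)])
    qed
  qed
  ultimately show ?thesis unfolding \<S>_def[symmetric] by (simp add: card_image)
qed

theorem lemma3p1:
  fixes C :: "(('a::{field,finite} ^ 7) set \<times> ('a ^ 7) set) set"
    and H P :: "('a ^ 7) set"
  assumes "indep_flag_set C"
    and "is_hyperplane H"
    and "is_point P"
  shows "(let \<E> = {E. is_plane E \<and> E \<subseteq> H \<and> (\<exists>S. (E, S) \<in> C \<and> E = H \<inter> S)} in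
           (\<forall>E\<in>\<E>. \<forall>E'\<in>\<E>. \<not> proj_disjoint E E') \<and>
           real (card \<E>) \<le> gauss_5_2 CARD('a))
       \<and> real (card {S. \<exists>E. (E, S) \<in> C \<and> P \<subseteq> S \<and> \<not> P \<subseteq> E}) \<le> gauss_5_2 CARD('a)"
proof -
  define \<E> where "\<E> = {E. is_plane E \<and> E \<subseteq> H \<and> (\<exists>S. (E, S) \<in> C \<and> E = H \<inter> S)}"
  have intersecting: "\<forall>E\<in>\<E>. \<forall>E'\<in>\<E>. \<not> proj_disjoint E E'"
    unfolding \<E>_def using hyperplane_traces_not_disjoint[OF assms(1)] by blast
  have "real (card \<E>) \<le> gauss_5_2 CARD('a)"
  proof (rule card_intersecting_planes_le)
    show "vec.subspace H" "card H = CARD('a) ^ 6"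
      using assms(2) card_proj_sub[OF assms(2)] by (simp_all add: proj_sub_subspace)
    show "vec.subspace E \<and> E \<subseteq> H \<and> card E = CARD('a) ^ 3" if "E \<in> \<E>" for E
      using that card_proj_sub[of 2 E] proj_sub_subspace[of 2 E] unfolding \<E>_def by simp
    show "E \<inter> E' \<noteq> {0}" if "E \<in> \<E>" "E' \<in> \<E>" for E E'
      using intersecting that unfolding proj_disjoint_def by blast
  qed
  then show ?thesis
    unfolding Let_def \<E>_def[symmetric]
    using intersecting card_solids_through_point_le[OF assms(1,3)] by blast
qed

end
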